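(* Assume $\mathcal R_0>1$, let $k$ satisfy $$\frac{\beta_E\nu\nu_E-(\nu_E+\delta_E)\delta_F}{\beta_E\nu\nu_E-(1-\gamma_s)(\nu_E+\delta_E)\delta_F}\,\delta_s<k<\delta_s,$$ and let $\kappa>0$ satisfy $$\frac{\delta_s-k}{k}\le\kappa<\frac{\gamma_s\delta_F(\nu_E+\delta_E)}{\beta_E\nu\nu_E-\delta_F(\nu_E+\delta_E)}.$$ Then $\mathbf 0$ is globally asymptotically stable in $\mathcal M(\kappa)$ (in the Filippov sense) for the closed-loop system $$\dot E=\beta_E F\Big(1-\frac EK\Big)-(\nu_E+\delta_E)E,\quad \dot M=(1-\nu)\nu_E E-\delta_M M,\quad \dot F=\nu\nu_E E\frac{M}{M+\gamma_sM_s}-\delta_F F,\quad \dot M_s=k(M+M_s)-\delta_sM_s.$$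
   Context: Parameters: $\beta_E,\nu_E,\delta_E,\delta_M,\delta_F,\delta_s,K>0$, $\nu\in(0,1)$, $\gamma_s\in(0,1]$, $\delta_s\ge\delta_M$. $\mathcal R_0:=\dfrac{\beta_E\nu\nu_E}{\delta_F(\nu_E+\delta_E)}$. $\mathcal D'=[0,+\infty)^4$, $z=(E,M,F,M_s)^T$. $\mathcal T_1=\{z\in\mathcal D':\beta_EF(1-E/K)\le(\nu_E+\delta_E)E\}$, $\mathcal T_2(\kappa)=\{z\in\mathcal D':M\le\kappa M_s\}$, $\mathcal T_3=\{z\in\mathcal D':(1-\nu)\nu_EE\le\delta_MM\}$, $\mathcal M(\kappa)=\mathcal T_1\cap\mathcal T_2(\kappa)\cap\mathcal T_3$. Filippov solutions: locally Lipschitz $z:I\to\mathcal D'$ with $\dot z(t)\in\bigcap_{\varepsilon>0}\bigcap_{N}\overline{\mathrm{conv}}\,X\big(((z(t)+\varepsilon B)\cap\mathcal D')\setminus N\big)$ for a.e. $t$ ($X$ the closed-loop right-hand side, $B$ unit ball, $N$ Lebesgue-null). Globally asymptotically stable in $\mathcal S$: for every $\varepsilon>0$ there is $\delta>0$ such that every Filippov solution with $z(0)\in\mathcal S$, $\|z(0)\|<\delta$ satisfies $\|z(t)\|<\varepsilon$ for all $t>0$, and every Filippov solution with $z(0)\in\mathcal S$ tends to $\mathbf 0$. *)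

theory Defs
  imports "HOL-Analysis.Analysis"
begin

definition Dp :: "(real^4) set" where
  "Dp = {z. \<forall>i. 0 \<le> z $ i}"

text \<open>Closed-loop right-hand side. At M + gamma_s M_s = 0 the quotient is
  0 by Isabelle's convention x / 0 = 0 (irrelevant for Filippov solutions).\<close>
definition closed_loop ::
  "real \<Rightarrow> real \<Rightarrow> real \<Rightarrow> real \<Rightarrow> real \<Rightarrow> real \<Rightarrow> real \<Rightarrow> real \<Rightarrow> real \<Rightarrow> real
   \<Rightarrow> real^4 \<Rightarrow> real^4" where
  "closed_loop \<beta>E \<nu>E \<delta>E \<delta>M \<delta>F \<delta>s K \<nu> \<gamma>s k z =
     (let E = z $ 1; M = z $ 2; F = z $ 3; Ms = z $ 4 in
      vector [\<beta>E * F * (1 - E / K) - (\<nu>E + \<delta>E) * E,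
              (1 - \<nu>) * \<nu>E * E - \<delta>M * M,
              \<nu> * \<nu>E * E * (M / (M + \<gamma>s * Ms)) - \<delta>F * F,
              k * (M + Ms) - \<delta>s * Ms])"

definition T1 :: "real \<Rightarrow> real \<Rightarrow> real \<Rightarrow> real \<Rightarrow> (real^4) set" where
  "T1 \<beta>E \<nu>E \<delta>E K = {z \<in> Dp. \<beta>E * z$3 * (1 - z$1 / K) \<le> (\<nu>E + \<delta>E) * z$1}"

definition T2 :: "real \<Rightarrow> (real^4) set" where
  "T2 \<kappa> = {z \<in> Dp. z$2 \<le> \<kappa> * z$4}"

definition T3 :: "real \<Rightarrow> real \<Rightarrow> real \<Rightarrow> (real^4) set" where
  "T3 \<nu> \<nu>E \<delta>M = {z \<in> Dp. (1 - \<nu>) * \<nu>E * z$1 \<le> \<delta>M * z$2}"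

definition Mset :: "real \<Rightarrow> real \<Rightarrow> real \<Rightarrow> real \<Rightarrow> real \<Rightarrow> real \<Rightarrow> real \<Rightarrow> (real^4) set" where
  "Mset \<beta>E \<nu>E \<delta>E \<delta>M K \<nu> \<kappa> = T1 \<beta>E \<nu>E \<delta>E K \<inter> T2 \<kappa> \<inter> T3 \<nu> \<nu>E \<delta>M"

definition filippov_set :: "(real^4 \<Rightarrow> real^4) \<Rightarrow> (real^4) set \<Rightarrow> real^4 \<Rightarrow> (real^4) set" where
  "filippov_set X D x =
     (\<Inter>\<epsilon>\<in>{0<..}. \<Inter>N\<in>null_sets lebesgue.
        closure (convex hull (X ` ((cball x \<epsilon> \<inter> D) - N))))"

definition filippov_solution :: "(real^4 \<Rightarrow> real^4) \<Rightarrow> (real^4) set \<Rightarrow> (real \<Rightarrow> real^4) \<Rightarrow> bool" where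
  "filippov_solution X D z \<longleftrightarrow>
     (\<forall>t\<ge>0. z t \<in> D) \<and>
     (\<forall>t\<ge>0. \<exists>\<delta>>0. \<exists>L. L-lipschitz_on (cball t \<delta> \<inter> {0..}) z) \<and>
     (AE t in lborel. 0 < t \<longrightarrow>
        (\<exists>v. (z has_vector_derivative v) (at t) \<and> v \<in> filippov_set X D (z t)))"

definition filippov_GAS :: "(real^4 \<Rightarrow> real^4) \<Rightarrow> (real^4) set \<Rightarrow> (real^4) set \<Rightarrow> bool" where
  "filippov_GAS X D S \<longleftrightarrow>
     (\<forall>\<epsilon>>0. \<exists>\<delta>>0. \<forall>z. filippov_solution X D z \<and> z 0 \<in> S \<and> norm (z 0) < \<delta> \<longrightarrow>
                        (\<forall>t>0. norm (z t) < \<epsilon>)) \<and>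
     (\<forall>z. filippov_solution X D z \<and> z 0 \<in> S \<longrightarrow> (z \<longlongrightarrow> 0) at_top)"

end

theory Submission
  imports Defs
begin

text \<open>The set \<open>\<M>(\<kappa>)\<close> is cut out of the orthant by \<open>gap1 \<le> 0\<close>, \<open>gap2 \<le> 0\<close> and
  \<open>gap3 \<le> 0\<close>. Along a solution the positive part of each gap grows at most linearly in
  the positive part of another one (\<open>gap1\<close> in \<open>gap2\<close>, \<open>gap2\<close> in \<open>gap3\<close>, \<open>gap3\<close> in
  \<open>gap1\<close>; the lower bound on \<open>\<kappa>\<close> is what controls \<open>gap2\<close>), so a Gronwall argument for
  the sum of the positive parts makes \<open>\<M>(\<kappa>)\<close> forward invariant. In \<open>\<M>(\<kappa>)\<close> the
  fraction \<open>M / (M + \<gamma>\<^sub>s M\<^sub>s)\<close> is at most \<open>\<rho> = \<kappa> / (\<kappa> + \<gamma>\<^sub>s)\<close>, and the upper bound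
  on \<open>\<kappa>\<close> says that the reproduction number reduced by the factor \<open>\<rho>\<close> is below 1.
  Hence a suitable positive linear function \<open>V\<close> satisfies \<open>V' \<le> -\<lambda> V\<close>, and solutions
  decay exponentially. The vector field is discontinuous only where \<open>M = M\<^sub>s = 0\<close>,
  which in \<open>\<M>(\<kappa>)\<close> happens only at the origin; there the Filippov set is controlled
  by a linear growth bound. Filippov solutions are differentiable only off a null set
  of times, so all comparison arguments use upper right Dini derivatives.\<close>

section \<open>Calm functions and upper right Dini derivatives\<close>

text \<open>Pointwise Lipschitz continuity (calmness). Unlike \<open>lipschitz_on\<close> it is closed
  under products without any boundedness assumption.\<close>
definition calm :: "real set \<Rightarrow> (real \<Rightarrow> real) \<Rightarrow> real \<Rightarrow> bool" where
  "calm S f x \<longleftrightarrow> (\<exists>T B. open T \<and> x \<in> T \<and> (\<forall>y\<in>S \<inter> T. \<bar>f y - f x\<bar> \<le> B * \<bar>y - x\<bar>))"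

lemma calm_const: "calm S (\<lambda>t. c) x"
  unfolding calm_def by (rule exI[of _ UNIV], rule exI[of _ 0]) auto

lemma calm_ident: "calm S (\<lambda>t. t) x"
  unfolding calm_def by (rule exI[of _ UNIV], rule exI[of _ 1]) auto

lemma calm_subset: "calm S f x \<Longrightarrow> S' \<subseteq> S \<Longrightarrow> calm S' f x"
  unfolding calm_def by blast

lemma calm_add:
  assumes "calm S f x" "calm S g x"
  shows "calm S (\<lambda>t. f t + g t) x"
proof -
  obtain T1 B1 where 1: "open T1" "x \<in> T1" "\<forall>y\<in>S \<inter> T1. \<bar>f y - f x\<bar> \<le> B1 * \<bar>y - x\<bar>"
    using assms(1) unfolding calm_def by blast
  obtain T2 B2 where 2: "open T2" "x \<in> T2" "\<forall>y\<in>S \<inter> T2. \<bar>g y - g x\<bar> \<le> B2 * \<bar>y - x\<bar>"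
    using assms(2) unfolding calm_def by blast
  show ?thesis unfolding calm_def
  proof (intro exI conjI ballI)
    show "open (T1 \<inter> T2)" "x \<in> T1 \<inter> T2" using 1 2 by auto
    fix y assume "y \<in> S \<inter> (T1 \<inter> T2)"
    then have "\<bar>f y - f x\<bar> \<le> B1 * \<bar>y - x\<bar>" "\<bar>g y - g x\<bar> \<le> B2 * \<bar>y - x\<bar>" using 1 2 by auto
    then show "\<bar>f y + g y - (f x + g x)\<bar> \<le> (B1 + B2) * \<bar>y - x\<bar>" by (simp add: distrib_right)
  qed
qed

lemma calm_minus: "calm S f x \<Longrightarrow> calm S (\<lambda>t. - f t) x"
  unfolding calm_def by (metis abs_minus_commute minus_diff_eq minus_diff_minus)

lemma calm_diff: "calm S f x \<Longrightarrow> calm S g x \<Longrightarrow> calm S (\<lambda>t. f t - g t) x"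
  using calm_add[of S f x "\<lambda>t. - g t"] calm_minus[of S g x] by simp

lemma calm_max_0: "calm S f x \<Longrightarrow> calm S (\<lambda>t. max (f t) 0) x"
proof -
  have "\<bar>max (f y) 0 - max (f x) 0\<bar> \<le> \<bar>f y - f x\<bar>" for y by (simp add: max_def abs_if)
  then show "calm S f x \<Longrightarrow> ?thesis" unfolding calm_def by (meson order_trans)
qed

lemma calm_mult:
  assumes "calm S f x" "calm S g x"
  shows "calm S (\<lambda>t. f t * g t) x"
proof -
  obtain T1 B1 where 1: "open T1" "x \<in> T1" "\<forall>y\<in>S \<inter> T1. \<bar>f y - f x\<bar> \<le> B1 * \<bar>y - x\<bar>"
    using assms(1) unfolding calm_def by blast
  obtain T2 B2 where 2: "open T2" "x \<in> T2" "\<forall>y\<in>S \<inter> T2. \<bar>g y - g x\<bar> \<le> B2 * \<bar>y - x\<bar>"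
    using assms(2) unfolding calm_def by blast
  show ?thesis unfolding calm_def
  proof (intro exI conjI ballI)
    show "open (T1 \<inter> T2 \<inter> ball x 1)" "x \<in> T1 \<inter> T2 \<inter> ball x 1" using 1 2 by auto
    fix y assume y: "y \<in> S \<inter> (T1 \<inter> T2 \<inter> ball x 1)"
    then have f: "\<bar>f y - f x\<bar> \<le> \<bar>B1\<bar> * \<bar>y - x\<bar>" and g: "\<bar>g y - g x\<bar> \<le> \<bar>B2\<bar> * \<bar>y - x\<bar>"
      using 1 2 by (auto intro: order_trans[OF _ mult_right_mono])
    have "\<bar>y - x\<bar> \<le> 1" using y by (auto simp: dist_real_def)
    then have "\<bar>f y - f x\<bar> \<le> \<bar>B1\<bar>" using f by (meson abs_ge_zero mult_left_le order_trans)
    then have fy: "\<bar>f y\<bar> \<le> \<bar>f x\<bar> + \<bar>B1\<bar>" by linarith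
    have "f y * g y - f x * g x = f y * (g y - g x) + g x * (f y - f x)" by (simp add: algebra_simps)
    then have "\<bar>f y * g y - f x * g x\<bar> \<le> \<bar>f y\<bar> * \<bar>g y - g x\<bar> + \<bar>g x\<bar> * \<bar>f y - f x\<bar>"
      by (metis abs_mult abs_triangle_ineq)
    also have "\<dots> \<le> (\<bar>f x\<bar> + \<bar>B1\<bar>) * (\<bar>B2\<bar> * \<bar>y - x\<bar>) + \<bar>g x\<bar> * (\<bar>B1\<bar> * \<bar>y - x\<bar>)"
      by (intro add_mono mult_mono f g fy) auto
    also have "\<dots> = ((\<bar>f x\<bar> + \<bar>B1\<bar>) * \<bar>B2\<bar> + \<bar>g x\<bar> * \<bar>B1\<bar>) * \<bar>y - x\<bar>"
      by (simp add: algebra_simps)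
    finally show "\<bar>f y * g y - f x * g x\<bar> \<le> ((\<bar>f x\<bar> + \<bar>B1\<bar>) * \<bar>B2\<bar> + \<bar>g x\<bar> * \<bar>B1\<bar>) * \<bar>y - x\<bar>" .
  qed
qed

lemma calm_divide_const: "calm S f x \<Longrightarrow> calm S (\<lambda>t. f t / c) x"
  using calm_mult[OF _ calm_const, of S f x "1 / c"] by simp

lemma has_real_derivative_imp_calm:
  assumes "(f has_real_derivative d) (at x)"
  shows "calm S f x"
proof -
  have "((\<lambda>y. (f y - f x) / (y - x)) \<longlongrightarrow> d) (at x)"
    using assms by (simp add: has_field_derivative_iff)
  then have "eventually (\<lambda>y. dist ((f y - f x) / (y - x)) d < 1) (at x)"
    by (rule tendstoD) simp
  then obtain T where T: "open T" "x \<in> T"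
    "\<And>y. y \<in> T \<Longrightarrow> y \<noteq> x \<Longrightarrow> dist ((f y - f x) / (y - x)) d < 1"
    unfolding eventually_at_topological by blast
  show ?thesis unfolding calm_def
  proof (intro exI conjI ballI)
    show "open T" "x \<in> T" by fact+
    fix y assume y: "y \<in> S \<inter> T"
    show "\<bar>f y - f x\<bar> \<le> (\<bar>d\<bar> + 1) * \<bar>y - x\<bar>"
    proof (cases "y = x")
      case False
      then have "\<bar>(f y - f x) / (y - x) - d\<bar> < 1" using T y by (auto simp: dist_real_def)
      then have "\<bar>(f y - f x) / (y - x)\<bar> \<le> \<bar>d\<bar> + 1" by linarith
      then show ?thesis using False by (simp add: abs_divide divide_le_eq)
    qed simp
  qed
qed

lemma calm_imp_continuous_within:
  assumes "calm S f x"
  shows "continuous (at x within S) f"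
proof -
  obtain T B where T: "open T" "x \<in> T" "\<forall>y\<in>S \<inter> T. \<bar>f y - f x\<bar> \<le> B * \<bar>y - x\<bar>"
    using assms unfolding calm_def by blast
  have "\<forall>\<^sub>F y in at x within S. norm (f y - f x) \<le> \<bar>B\<bar> * norm (y - x)"
    unfolding eventually_at_topological using T
    by (intro exI[of _ T]) (force intro: order_trans[OF _ mult_right_mono])
  moreover have "((\<lambda>y. \<bar>B\<bar> * norm (y - x)) \<longlongrightarrow> 0) (at x within S)"
    by (intro tendsto_eq_intros) auto
  ultimately have "((\<lambda>y. f y - f x) \<longlongrightarrow> 0) (at x within S)"
    by (rule Lim_null_comparison)
  then show ?thesis by (simp add: continuous_within LIM_zero_iff)
qed

lemma calm_imp_continuous_on: "(\<And>x. x \<in> S \<Longrightarrow> calm S f x) \<Longrightarrow> continuous_on S f"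
  by (simp add: calm_imp_continuous_within continuous_on_eq_continuous_within)

lemma eventually_at_right_imp_bex:
  assumes "\<forall>\<^sub>F t in at_right s. P t" and "s < (b::real)"
  shows "\<exists>t\<in>{s<..b}. P t"
proof -
  obtain b' where b': "b' > s" "\<And>y. s < y \<Longrightarrow> y < b' \<Longrightarrow> P y"
    using assms(1) unfolding eventually_at_right_field by blast
  define t where "t = (s + min b' b) / 2"
  have "s < t" "t < b'" "t \<le> b" using b' assms(2) by (auto simp: t_def)
  then show ?thesis using b' by (intro bexI[of _ t]) auto
qed

lemma negligible_calm_image:
  assumes "negligible N" and "\<And>x. x \<in> N \<Longrightarrow> calm N h x"
  shows "negligible (h ` N)"
proof (rule negligible_locally_Lipschitz_image)
  fix x assume "x \<in> N"
  then show "\<exists>T B. open T \<and> x \<in> T \<and> (\<forall>y\<in>N \<inter> T. norm (h y - h x) \<le> B * norm (y - x))"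
    using assms(2) unfolding calm_def by fastforce
qed (use assms(1) in simp_all)

text \<open>The exceptional null set \<open>N\<close> is harmless because calm functions map null sets
  to null sets: some level strictly between \<open>g a\<close> and \<open>g b\<close> is not attained on \<open>N\<close>,
  and the last time \<open>g\<close> is at most that level is then a regular point where \<open>g\<close> must
  cross it upwards.\<close>
lemma dini_nonincreasing:
  fixes g :: "real \<Rightarrow> real"
  assumes ab: "a \<le> b" and calm: "\<And>x. x \<in> {a..b} \<Longrightarrow> calm {a..b} g x" and N: "negligible N"
    and dini: "\<And>s e. s \<in> {a<..<b} \<Longrightarrow> s \<notin> N \<Longrightarrow> e > 0 \<Longrightarrow>
                 \<forall>\<^sub>F t in at_right s. g t - g s \<le> e * (t - s)"
  shows "g b \<le> g a"
proof (rule ccontr)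
  assume "\<not> g b \<le> g a"
  then have gab: "g a < g b" by simp
  with ab have "a < b" by (cases "a = b") auto
  define e where "e = (g b - g a) / (2 * (b - a))"
  have e0: "e > 0" using gab \<open>a < b\<close> by (simp add: e_def)
  define h where "h t = g t - e * (t - a)" for t
  have "e * (b - a) = (g b - g a) / 2" using \<open>a < b\<close> by (simp add: e_def field_simps)
  then have hab: "h a < h b" using gab by (simp add: h_def)
  have calm_h: "calm {a..b} h x" if "x \<in> {a..b}" for x
    unfolding h_def by (intro calm_diff calm_mult calm_const calm_ident calm that)
  have cont_h: "continuous_on {a..b} h" by (rule calm_imp_continuous_on[OF calm_h])
  have "negligible (h ` (N \<inter> {a..b}))"
    using N by (intro negligible_calm_image) (auto intro: negligible_subset calm_subset[OF calm_h])
  moreover have "\<not> negligible {h a<..<h b}"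
    using negligible_interval(2)[of "h a" "h b"] hab by (simp add: box_real)
  ultimately obtain y where y: "y \<in> {h a<..<h b}" "y \<notin> h ` (N \<inter> {a..b})"
    using negligible_subset by blast
  define C where "C = {a..b} \<inter> h -` {..y}"
  have "closed C" unfolding C_def by (rule continuous_closed_preimage[OF cont_h]) auto
  moreover have "a \<in> C" "bdd_above C" using y ab by (auto simp: C_def bdd_above_def)
  ultimately have sC: "Sup C \<in> C" using closed_contains_Sup by blast
  define s where "s = Sup C"
  have s: "a \<le> s" "s \<le> b" "h s \<le> y" using sC by (auto simp: C_def s_def)
  have after: "h t > y" if "t \<in> {s<..b}" for t
  proof (rule ccontr)
    assume "\<not> y < h t"
    then have "t \<in> C" using that s by (auto simp: C_def)
    then show False using cSup_upper[OF _ \<open>bdd_above C\<close>] that by (force simp: s_def)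
  qed
  have "s < b" using s y hab by (metis greaterThanLessThan_iff le_less not_le)
  have hs: "h s = y"
  proof (rule ccontr)
    assume "h s \<noteq> y"
    then have "h s < y" using s by simp
    have "continuous (at s within {a..b}) h"
      using cont_h s by (simp add: continuous_on_eq_continuous_within)
    then obtain d where d: "d > 0" "\<And>t. t \<in> {a..b} \<Longrightarrow> dist t s < d \<Longrightarrow> dist (h t) (h s) < y - h s"
      using \<open>h s < y\<close> unfolding continuous_within_eps_delta by (metis diff_gt_0_iff_gt)
    define t where "t = min b (s + d / 2)"
    have t: "t \<in> {s<..b}" "t \<in> {a..b}" "dist t s < d"
      using d \<open>s < b\<close> s by (auto simp: t_def dist_real_def)
    have "h t < y" using d(2)[OF t(2,3)] by (simp add: dist_real_def)
    with after[OF t(1)] show False by simp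
  qed
  have "s \<in> {a<..<b}" "s \<notin> N" using hs y s \<open>s < b\<close> by (auto simp: less_le)
  then have "\<forall>\<^sub>F t in at_right s. g t - g s \<le> e * (t - s)" using dini e0 by blast
  then obtain t where t: "t \<in> {s<..b}" "g t - g s \<le> e * (t - s)"
    using eventually_at_right_imp_bex \<open>s < b\<close> by blast
  then have "h t \<le> h s" by (simp add: h_def algebra_simps)
  with after[OF t(1)] hs show False by simp
qed

lemma has_real_derivative_eventually_right_le:
  assumes "(p has_real_derivative d) (at s)" and "d \<le> B" and "e > 0"
  shows "\<forall>\<^sub>F t in at_right s. p t - p s \<le> (B + e) * (t - s)"
proof -
  have "((\<lambda>t. (p t - p s) / (t - s)) \<longlongrightarrow> d) (at_right s)"
    using assms(1) by (simp add: has_field_derivative_iff filterlim_at_split)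
  then have "\<forall>\<^sub>F t in at_right s. (p t - p s) / (t - s) < B + e"
    using assms(2,3) by (intro order_tendstoD(2)) auto
  with eventually_at_right_less[of s] show ?thesis
    by eventually_elim (simp add: pos_divide_less_eq less_imp_le)
qed

lemma has_real_derivative_max_0_eventually_right_le:
  assumes der: "(p has_real_derivative d) (at s)" and bound: "p s \<ge> 0 \<Longrightarrow> d \<le> B"
    and "B \<ge> 0" and "e > 0"
  shows "\<forall>\<^sub>F t in at_right s. max (p t) 0 - max (p s) 0 \<le> (B + e) * (t - s)"
proof (cases "p s < 0")
  case True
  have "\<forall>\<^sub>F t in at s. p t < 0"
    using DERIV_isCont[OF der] True by (simp add: isCont_def order_tendstoD(2))
  then have "\<forall>\<^sub>F t in at_right s. p t < 0" by (simp add: eventually_at_split)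
  with eventually_at_right_less[of s] show ?thesis
    by eventually_elim (use True assms(3,4) in auto)
next
  case False
  then have "d \<le> B" using bound by simp
  from has_real_derivative_eventually_right_le[OF der this assms(4)] eventually_at_right_less[of s]
  show ?thesis
  proof eventually_elim
    case (elim t)
    have "0 \<le> (B + e) * (t - s)" using elim assms(3,4) by simp
    then show ?case using elim False by (auto simp: max_def)
  qed
qed

lemma dini_gronwall_zero_short:
  fixes W :: "real \<Rightarrow> real"
  assumes ab: "a \<le> b" and calm: "\<And>t. t \<in> {a..b} \<Longrightarrow> calm {a..b} W t"
    and nonneg: "\<And>t. t \<in> {a..b} \<Longrightarrow> W t \<ge> 0" and "W a = 0"
    and L: "L \<ge> 0" "L * (b - a) < 1" and N: "negligible N"
    and dini: "\<And>s e. s \<in> {a<..<b} \<Longrightarrow> s \<notin> N \<Longrightarrow> e > 0 \<Longrightarrow>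
                 \<forall>\<^sub>F t in at_right s. W t - W s \<le> (L * W s + e) * (t - s)"
    and t: "t \<in> {a..b}"
  shows "W t = 0"
proof -
  have cont: "continuous_on {a..b} W" by (rule calm_imp_continuous_on[OF calm])
  obtain t1 where t1: "t1 \<in> {a..b}" "\<And>t. t \<in> {a..b} \<Longrightarrow> W t \<le> W t1"
    using continuous_attains_sup[OF compact_Icc _ cont] ab by auto
  define g where "g t = W t - L * W t1 * (t - a)" for t
  have "g t1 \<le> g a"
  proof (rule dini_nonincreasing[of a t1 g N])
    show "calm {a..t1} g x" if "x \<in> {a..t1}" for x
      unfolding g_def using that t1
      by (intro calm_diff calm_mult calm_const calm_ident calm_subset[OF calm]) auto
    fix s e :: real assume s: "s \<in> {a<..<t1}" "s \<notin> N" "e > 0"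
    then have "s \<in> {a<..<b}" using t1 by auto
    have "W s \<le> W t1" using t1 \<open>s \<in> {a<..<b}\<close> by simp
    then have mono: "(L * W s + e) * (t - s) \<le> (L * W t1 + e) * (t - s)" if "s < t" for t
      using that L by (intro mult_right_mono add_right_mono mult_left_mono) auto
    from dini[OF \<open>s \<in> {a<..<b}\<close> s(2,3)] eventually_at_right_less[of s]
    show "\<forall>\<^sub>F t in at_right s. g t - g s \<le> e * (t - s)"
    proof eventually_elim
      case (elim t)
      then show ?case using mono[of t] by (simp add: g_def algebra_simps)
    qed
  qed (use t1 N in auto)
  then have "W t1 * (1 - L * (t1 - a)) \<le> 0" using \<open>W a = 0\<close> by (simp add: g_def algebra_simps)
  moreover have "L * (t1 - a) \<le> L * (b - a)" using t1 L by (intro mult_left_mono) auto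
  then have "1 - L * (t1 - a) > 0" using L(2) by linarith
  ultimately have "W t1 \<le> 0" by (simp add: mult_le_0_iff)
  then show ?thesis using t1 nonneg t by (meson order.antisym order.trans)
qed

lemma dini_gronwall_zero:
  fixes W :: "real \<Rightarrow> real"
  assumes calm: "\<And>t. t \<in> {a..b} \<Longrightarrow> calm {a..b} W t"
    and nonneg: "\<And>t. t \<in> {a..b} \<Longrightarrow> W t \<ge> 0" and "W a = 0"
    and L: "L \<ge> 0" and N: "negligible N"
    and dini: "\<And>s e. s \<in> {a<..<b} \<Longrightarrow> s \<notin> N \<Longrightarrow> e > 0 \<Longrightarrow>
                 \<forall>\<^sub>F t in at_right s. W t - W s \<le> (L * W s + e) * (t - s)"
    and t: "t \<in> {a..b}"
  shows "W t = 0"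
proof -
  define h where "h = 1 / (2 * (L + 1))"
  have h: "h > 0" "L * h < 1" using L by (auto simp: h_def field_simps)
  define c where "c n = min b (a + real n * h)" for n
  have "\<forall>t\<in>{a..c n}. W t = 0" for n
  proof (induction n)
    case 0
    have "c 0 = a" using t by (simp add: c_def)
    then show ?case using \<open>W a = 0\<close> by simp
  next
    case (Suc n)
    have c: "a \<le> c n" "c n \<le> c (Suc n)" "c (Suc n) \<le> b" "c (Suc n) - c n \<le> h"
      using t h by (auto simp: c_def algebra_simps)
    have "W t = 0" if "t \<in> {c n..c (Suc n)}" for t
    proof (rule dini_gronwall_zero_short[of "c n" "c (Suc n)" W L N])
      show "L * (c (Suc n) - c n) < 1"
        using mult_left_mono[OF c(4) L] h by linarith
    qed (use c that Suc.IH L N in \<open>auto intro: calm_subset[OF calm] nonneg dini\<close>)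
    with Suc.IH show ?case by force
  qed
  moreover have "t \<le> c (nat \<lceil>(b - a) / h\<rceil>)"
  proof -
    have "(b - a) / h \<le> real (nat \<lceil>(b - a) / h\<rceil>)" by linarith
    then have "b - a \<le> real (nat \<lceil>(b - a) / h\<rceil>) * h" using h by (simp add: divide_le_eq)
    then show ?thesis using t by (auto simp: c_def)
  qed
  ultimately show ?thesis using t by auto
qed

lemma continuous_on_nonpos_at_right_end:
  fixes f :: "real \<Rightarrow> real"
  assumes "continuous_on {a..b} f" and "\<And>u. u \<in> {a..<b} \<Longrightarrow> f u \<le> 0" and "a < b"
  shows "f b \<le> 0"
proof -
  have "closed ({a..b} \<inter> f -` {..0})"
    by (rule continuous_closed_preimage[OF assms(1)]) auto
  moreover have "{a..<b} \<subseteq> {a..b} \<inter> f -` {..0}" using assms(2) by auto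
  ultimately have "closure {a..<b} \<subseteq> {a..b} \<inter> f -` {..0}" by (rule closure_minimal[rotated])
  moreover have "b \<in> closure {a..<b}" using assms(3) by (simp add: closure_atLeastLessThan)
  ultimately have "b \<in> f -` {..0}" by blast
  then show ?thesis by simp
qed

section \<open>Filippov solutions\<close>

lemma filippov_set_inner_le:
  assumes v: "v \<in> filippov_set X D x" and bound: "\<And>y. y \<in> D \<Longrightarrow> inner w (X y) \<le> f y"
    and cont: "continuous (at x within D) f"
  shows "inner w v \<le> f x"
proof (rule field_le_epsilon)
  fix e :: real assume "e > 0"
  then obtain \<epsilon> where \<epsilon>: "\<epsilon> > 0" "\<And>y. y \<in> D \<Longrightarrow> dist y x < \<epsilon> \<Longrightarrow> dist (f y) (f x) < e"
    using cont unfolding continuous_within_eps_delta by blast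
  have "{} \<in> null_sets lebesgue" "\<epsilon> / 2 \<in> {0<..}" using \<epsilon>(1) by auto
  then have "v \<in> closure (convex hull (X ` ((cball x (\<epsilon> / 2) \<inter> D) - {})))"
    using v unfolding filippov_set_def by blast
  moreover have "X ` ((cball x (\<epsilon> / 2) \<inter> D) - {}) \<subseteq> {u. inner w u \<le> f x + e}"
  proof clarify
    fix y assume "y \<in> cball x (\<epsilon> / 2)" "y \<in> D"
    then have "dist y x < \<epsilon>" using \<epsilon>(1) by (simp add: dist_commute)
    then have "dist (f y) (f x) < e" using \<epsilon>(2) \<open>y \<in> D\<close> by blast
    then show "inner w (X y) \<le> f x + e" using bound[OF \<open>y \<in> D\<close>] by (simp add: dist_real_def)
  qed
  then have "closure (convex hull (X ` ((cball x (\<epsilon> / 2) \<inter> D) - {}))) \<subseteq> {u. inner w u \<le> f x + e}"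
    by (intro closure_minimal hull_minimal closed_halfspace_le convex_halfspace_le)
  ultimately show "inner w v \<le> f x + e" by auto
qed

lemma filippov_set_nth_eq:
  assumes v: "v \<in> filippov_set X D x" and cont: "continuous (at x within D) (\<lambda>y. X y $ i)"
  shows "v $ i = X x $ i"
proof -
  have "inner (axis i 1) v \<le> X x $ i"
    by (rule filippov_set_inner_le[OF v _ cont]) (simp add: inner_axis')
  moreover have "inner (axis i (-1)) v \<le> - X x $ i"
    by (rule filippov_set_inner_le[OF v _ continuous_minus[OF cont]]) (simp add: inner_axis')
  ultimately show ?thesis by (simp add: inner_axis')
qed

lemma has_vector_derivative_nth:
  assumes "(z has_vector_derivative v) (at s)"
  shows "((\<lambda>t. z t $ i) has_real_derivative v $ i) (at s)"
proof -
  have "(z has_derivative (\<lambda>x. x *\<^sub>R v)) (at s)"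
    using assms by (simp add: has_vector_derivative_def)
  from bounded_linear.has_derivative[OF bounded_linear_vec_nth this, of i]
  have "((\<lambda>t. z t $ i) has_derivative (\<lambda>x. x * v $ i)) (at s)" by simp
  moreover have "(\<lambda>x. x * v $ i) = (*) (v $ i)" by (rule ext) simp
  ultimately show ?thesis by (simp add: has_field_derivative_def)
qed

lemma filippov_solution_in_domain: "filippov_solution X D z \<Longrightarrow> t \<ge> 0 \<Longrightarrow> z t \<in> D"
  by (simp add: filippov_solution_def)

lemma filippov_solution_calm:
  assumes "filippov_solution X D z" and "t \<ge> 0"
  shows "calm {0..} (\<lambda>s. z s $ i) t"
proof -
  obtain \<delta> L where "\<delta> > 0" and lip: "L-lipschitz_on (cball t \<delta> \<inter> {0..}) z"
    using assms unfolding filippov_solution_def by blast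
  show ?thesis unfolding calm_def
  proof (intro exI conjI ballI)
    show "open (ball t \<delta>)" "t \<in> ball t \<delta>" using \<open>\<delta> > 0\<close> by auto
    fix y assume y: "y \<in> {0..} \<inter> ball t \<delta>"
    have "\<bar>z y $ i - z t $ i\<bar> \<le> dist (z y) (z t)"
      using component_le_norm_cart[of "z y - z t" i] by (simp add: dist_norm)
    also have "\<dots> \<le> L * dist y t"
      by (rule lipschitz_onD[OF lip]) (use y assms(2) \<open>\<delta> > 0\<close> in \<open>auto simp: dist_commute\<close>)
    finally show "\<bar>z y $ i - z t $ i\<bar> \<le> L * \<bar>y - t\<bar>" by (simp add: dist_real_def)
  qed
qed

lemma filippov_solution_derivative_ae:
  assumes "filippov_solution X D z"
  obtains N where "negligible N"
    and "\<And>s. 0 < s \<Longrightarrow> s \<notin> N \<Longrightarrow>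
           \<exists>v. (z has_vector_derivative v) (at s) \<and> v \<in> filippov_set X D (z s)"
proof -
  have "AE s in lborel. 0 < s \<longrightarrow> (\<exists>v. (z has_vector_derivative v) (at s) \<and> v \<in> filippov_set X D (z s))"
    using assms unfolding filippov_solution_def by blast
  then obtain N where N: "{s \<in> space lborel. \<not> (0 < s \<longrightarrow>
        (\<exists>v. (z has_vector_derivative v) (at s) \<and> v \<in> filippov_set X D (z s)))} \<subseteq> N"
    "emeasure lborel N = 0" "N \<in> sets lborel"
    by (rule AE_E)
  have "N \<in> null_sets lborel" using N by auto
  then have "negligible N" by (simp add: negligible_iff_null_sets null_sets_completionI)
  moreover have "\<And>s. 0 < s \<Longrightarrow> s \<notin> N \<Longrightarrow>
      \<exists>v. (z has_vector_derivative v) (at s) \<and> v \<in> filippov_set X D (z s)"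
    using N(1) by auto
  ultimately show ?thesis using that by blast
qed

section \<open>The closed-loop system\<close>

lemma vector_4 [simp]:
  "(vector [x, y, z, w] :: ('a::zero)^4) $ 1 = x"
  "(vector [x, y, z, w] :: ('a::zero)^4) $ 2 = y"
  "(vector [x, y, z, w] :: ('a::zero)^4) $ 3 = z"
  "(vector [x, y, z, w] :: ('a::zero)^4) $ 4 = w"
  unfolding vector_def by simp_all

lemma mem_Dp_iff: "y \<in> Dp \<longleftrightarrow> 0 \<le> y $ 1 \<and> 0 \<le> y $ 2 \<and> 0 \<le> y $ 3 \<and> 0 \<le> y $ 4"
  unfolding Dp_def using forall_4[of "\<lambda>i. 0 \<le> y $ i"] by simp

lemma inner_4: "inner (w :: real^4) u = w $ 1 * u $ 1 + w $ 2 * u $ 2 + w $ 3 * u $ 3 + w $ 4 * u $ 4"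
  by (simp add: inner_vec_def sum_4)

definition mass :: "real^4 \<Rightarrow> real" where
  "mass y = y $ 1 + y $ 2 + y $ 3 + y $ 4"

lemma mass_eq_inner_1: "mass y = inner 1 y"
  by (simp add: mass_def inner_4)

lemma continuous_mass: "continuous (at x within S) mass"
  unfolding mass_def by (intro continuous_intros continuous_at_imp_continuous_at_within isCont_vec_nth continuous_ident)

lemma norm_le_mass: "y \<in> Dp \<Longrightarrow> norm y \<le> mass y"
  using norm_le_l1_cart[of y] by (simp add: sum_4 mem_Dp_iff mass_def)

lemma mass_le_norm: "mass y \<le> 4 * norm y"
  using component_le_norm_cart[of y 1] component_le_norm_cart[of y 2]
    component_le_norm_cart[of y 3] component_le_norm_cart[of y 4]
  by (simp add: mass_def)

lemma mass_eq_0_iff: "y \<in> Dp \<Longrightarrow> mass y = 0 \<longleftrightarrow> y = 0"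
  by (auto simp: mem_Dp_iff mass_def vec_eq_iff forall_4)

lemma calm_mass_solution:
  "filippov_solution X D z \<Longrightarrow> t \<ge> 0 \<Longrightarrow> calm {0..} (\<lambda>s. mass (z s)) t"
  unfolding mass_def by (intro calm_add filippov_solution_calm)

locale sterile_insect_feedback =
  fixes \<beta>E \<nu>E \<delta>E \<delta>M \<delta>F \<delta>s K \<nu> \<gamma>s k \<kappa> :: real
  assumes rates_pos: "\<beta>E > 0" "\<nu>E > 0" "\<delta>E > 0" "\<delta>M > 0" "\<delta>F > 0" "K > 0"
    and \<nu>: "0 < \<nu>" "\<nu> < 1" and \<gamma>s: "\<gamma>s > 0" and \<kappa>: "\<kappa> > 0"
    and k: "0 < k" "k < \<delta>s" "\<delta>s - k \<le> \<kappa> * k"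
    and subcritical: "\<beta>E * \<nu> * \<nu>E * \<kappa> < \<delta>F * (\<nu>E + \<delta>E) * (\<kappa> + \<gamma>s)"
begin

abbreviation "X \<equiv> closed_loop \<beta>E \<nu>E \<delta>E \<delta>M \<delta>F \<delta>s K \<nu> \<gamma>s k"
abbreviation "\<M> \<equiv> Mset \<beta>E \<nu>E \<delta>E \<delta>M K \<nu> \<kappa>"

lemma X_nth:
  "X y $ 1 = \<beta>E * y $ 3 * (1 - y $ 1 / K) - (\<nu>E + \<delta>E) * y $ 1"
  "X y $ 2 = (1 - \<nu>) * \<nu>E * y $ 1 - \<delta>M * y $ 2"
  "X y $ 3 = \<nu> * \<nu>E * y $ 1 * (y $ 2 / (y $ 2 + \<gamma>s * y $ 4)) - \<delta>F * y $ 3"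
  "X y $ 4 = k * (y $ 2 + y $ 4) - \<delta>s * y $ 4"
  by (simp_all add: closed_loop_def Let_def)

definition gap1 :: "real^4 \<Rightarrow> real" where
  "gap1 y = \<beta>E * y $ 3 * (1 - y $ 1 / K) - (\<nu>E + \<delta>E) * y $ 1"

definition gap2 :: "real^4 \<Rightarrow> real" where
  "gap2 y = y $ 2 - \<kappa> * y $ 4"

definition gap3 :: "real^4 \<Rightarrow> real" where
  "gap3 y = (1 - \<nu>) * \<nu>E * y $ 1 - \<delta>M * y $ 2"

definition excess :: "real^4 \<Rightarrow> real" where
  "excess y = max (gap1 y) 0 + max (gap2 y) 0 + max (gap3 y) 0"

lemma X_nth_gap: "X y $ 1 = gap1 y" "X y $ 2 = gap3 y"
  by (simp_all add: X_nth gap1_def gap3_def)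

lemma mem_M_iff: "y \<in> \<M> \<longleftrightarrow> y \<in> Dp \<and> gap1 y \<le> 0 \<and> gap2 y \<le> 0 \<and> gap3 y \<le> 0"
  by (auto simp: Mset_def T1_def T2_def T3_def gap1_def gap2_def gap3_def)

lemma mem_M_iff_excess: "y \<in> \<M> \<longleftrightarrow> y \<in> Dp \<and> excess y = 0"
  by (auto simp: mem_M_iff excess_def max_def)

lemma zero_mem_M: "0 \<in> \<M>"
  by (simp add: mem_M_iff mem_Dp_iff gap1_def gap2_def gap3_def)

lemma M_denominator_pos:
  assumes "y \<in> \<M>" "y \<noteq> 0"
  shows "y $ 2 + \<gamma>s * y $ 4 > 0"
proof (rule ccontr)
  assume neg: "\<not> y $ 2 + \<gamma>s * y $ 4 > 0"
  have nonneg: "0 \<le> y $ 1" "0 \<le> y $ 2" "0 \<le> y $ 3" "0 \<le> y $ 4"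
    and gaps: "gap1 y \<le> 0" "gap3 y \<le> 0"
    using assms(1) by (auto simp: mem_M_iff mem_Dp_iff)
  have "\<gamma>s * y $ 4 \<ge> 0" using \<gamma>s nonneg by simp
  then have "y $ 2 = 0" "\<gamma>s * y $ 4 = 0" using neg nonneg by linarith+
  then have "y $ 4 = 0" using \<gamma>s by simp
  have "(1 - \<nu>) * \<nu>E * y $ 1 \<le> 0" using gaps(2) \<open>y $ 2 = 0\<close> by (simp add: gap3_def)
  then have "y $ 1 = 0" using \<nu> rates_pos nonneg by (simp add: mult_le_0_iff)
  then have "\<beta>E * y $ 3 \<le> 0" using gaps(1) by (simp add: gap1_def)
  then have "y $ 3 = 0" using rates_pos nonneg by (simp add: mult_le_0_iff)
  with \<open>y $ 1 = 0\<close> \<open>y $ 2 = 0\<close> \<open>y $ 4 = 0\<close> assms(2) show False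
    by (simp add: vec_eq_iff forall_4)
qed

lemma X_linear_growth:
  assumes y: "y \<in> Dp" and w: "w \<in> Dp"
  shows "inner w (X y) \<le> mass w * (\<beta>E + \<nu>E + k) * mass y"
proof -
  define G where "G = \<beta>E + \<nu>E + k"
  have y0: "0 \<le> y $ 1" "0 \<le> y $ 2" "0 \<le> y $ 3" "0 \<le> y $ 4"
    and w0: "0 \<le> w $ 1" "0 \<le> w $ 2" "0 \<le> w $ 3" "0 \<le> w $ 4"
    using y w by (auto simp: mem_Dp_iff)
  have frac: "y $ 2 / (y $ 2 + \<gamma>s * y $ 4) \<le> 1"
    using y0 \<gamma>s mult_nonneg_nonneg[of \<gamma>s "y $ 4"] by (auto simp: divide_le_eq_1)
  have G: "\<beta>E \<le> G" "\<nu>E \<le> G" "k \<le> G" using rates_pos k by (simp_all add: G_def)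
  have mass: "y $ 1 \<le> mass y" "y $ 3 \<le> mass y" "y $ 2 + y $ 4 \<le> mass y"
    using y0 by (simp_all add: mass_def)
  have "X y $ 1 \<le> \<beta>E * y $ 3"
    using rates_pos y0 by (simp add: X_nth algebra_simps)
  also have "\<dots> \<le> G * mass y" using G mass y0 rates_pos by (intro mult_mono) auto
  finally have x1: "X y $ 1 \<le> G * mass y" .
  have "(1 - \<nu>) * (\<nu>E * y $ 1) \<le> \<nu>E * y $ 1"
    using \<nu> rates_pos y0 by (intro mult_left_le_one_le) auto
  moreover have "\<delta>M * y $ 2 \<ge> 0" using rates_pos y0 by simp
  ultimately have "X y $ 2 \<le> \<nu>E * y $ 1"
    unfolding X_nth mult.assoc by linarith
  also have "\<dots> \<le> G * mass y" using G mass y0 rates_pos by (intro mult_mono) auto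
  finally have x2: "X y $ 2 \<le> G * mass y" .
  have "\<nu> * \<nu>E * y $ 1 * (y $ 2 / (y $ 2 + \<gamma>s * y $ 4)) \<le> \<nu> * \<nu>E * y $ 1"
    using frac \<nu> rates_pos y0 by (intro mult_left_le) auto
  also have "\<dots> \<le> \<nu>E * y $ 1" using \<nu> rates_pos y0 by (simp add: mult_left_le_one_le)
  also have "\<dots> \<le> G * mass y" using G mass y0 rates_pos by (intro mult_mono) auto
  finally have "\<nu> * \<nu>E * y $ 1 * (y $ 2 / (y $ 2 + \<gamma>s * y $ 4)) \<le> G * mass y" .
  moreover have "\<delta>F * y $ 3 \<ge> 0" using rates_pos y0 by simp
  ultimately have x3: "X y $ 3 \<le> G * mass y" unfolding X_nth by linarith
  have "X y $ 4 \<le> k * (y $ 2 + y $ 4)" using k y0 by (simp add: X_nth)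
  also have "\<dots> \<le> G * mass y" using G mass y0 k by (intro mult_mono) auto
  finally have x4: "X y $ 4 \<le> G * mass y" .
  have "inner w (X y) \<le> w $ 1 * (G * mass y) + w $ 2 * (G * mass y) + w $ 3 * (G * mass y)
      + w $ 4 * (G * mass y)"
    unfolding inner_4 by (intro add_mono mult_left_mono x1 x2 x3 x4 w0)
  then show ?thesis by (simp add: G_def mass_def algebra_simps)
qed

lemma filippov_set_linear_growth:
  assumes "v \<in> filippov_set X Dp x" and "w \<in> Dp"
  shows "inner w v \<le> mass w * (\<beta>E + \<nu>E + k) * mass x"
proof (rule filippov_set_inner_le[OF assms(1)])
  show "inner w (X y) \<le> mass w * (\<beta>E + \<nu>E + k) * mass y" if "y \<in> Dp" for y
    by (rule X_linear_growth[OF that assms(2)])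
  show "continuous (at x within Dp) (\<lambda>y. mass w * (\<beta>E + \<nu>E + k) * mass y)"
    by (intro continuous_mult continuous_const continuous_mass)
qed

lemma isCont_X_nth:
  assumes "x $ 2 + \<gamma>s * x $ 4 \<noteq> 0"
  shows "isCont (\<lambda>y. X y $ i) x"
proof -
  have [continuous_intros]: "isCont (\<lambda>y. y $ j) x" for j
    by (intro isCont_vec_nth continuous_ident)
  have "i = 1 \<or> i = 2 \<or> i = 3 \<or> i = 4" by (rule exhaust_4)
  then show ?thesis
    by (elim disjE; simp only: X_nth; intro continuous_intros; use assms rates_pos in simp)
qed

lemma filippov_set_X:
  assumes "v \<in> filippov_set X Dp x" and "x $ 2 + \<gamma>s * x $ 4 \<noteq> 0"
  shows "v = X x"
  unfolding vec_eq_iff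
  using filippov_set_nth_eq[OF assms(1) continuous_at_imp_continuous_at_within[OF isCont_X_nth[OF assms(2)]]]
  by blast

lemma solution_stays_zero:
  assumes sol: "filippov_solution X Dp z" and t0: "t0 \<ge> 0" "z t0 = 0" and t: "t \<ge> t0"
  shows "z t = 0"
proof -
  obtain N where N: "negligible N" and der: "\<And>s. 0 < s \<Longrightarrow> s \<notin> N \<Longrightarrow>
      \<exists>v. (z has_vector_derivative v) (at s) \<and> v \<in> filippov_set X Dp (z s)"
    using filippov_solution_derivative_ae[OF sol] by blast
  define L where "L = 4 * (\<beta>E + \<nu>E + k)"
  have "mass (z t) = 0"
  proof (rule dini_gronwall_zero[of t0 t "\<lambda>s. mass (z s)" L N])
    show "calm {t0..t} (\<lambda>s. mass (z s)) s" if "s \<in> {t0..t}" for s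
      using calm_mass_solution[OF sol, of s] that t0 by (auto elim: calm_subset)
    show "mass (z s) \<ge> 0" if "s \<in> {t0..t}" for s
      using filippov_solution_in_domain[OF sol, of s] that t0 by (simp add: mass_def mem_Dp_iff)
  next
    fix s e :: real assume s: "s \<in> {t0<..<t}" "s \<notin> N" "e > 0"
    then obtain v where v: "(z has_vector_derivative v) (at s)" "v \<in> filippov_set X Dp (z s)"
      using der[of s] t0 by auto
    have "((\<lambda>s. mass (z s)) has_real_derivative mass v) (at s)"
      unfolding mass_def by (intro DERIV_add has_vector_derivative_nth[OF v(1)])
    moreover have "mass v \<le> L * mass (z s)"
      using filippov_set_linear_growth[OF v(2), of 1]
      by (simp add: mass_eq_inner_1[symmetric] mem_Dp_iff L_def mass_def[of 1])
    ultimately show "\<forall>\<^sub>F u in at_right s. mass (z u) - mass (z s) \<le> (L * mass (z s) + e) * (u - s)"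
      using s(3) by (rule has_real_derivative_eventually_right_le)
  qed (use t0 t rates_pos k N in \<open>simp_all add: mass_def L_def\<close>)
  then show ?thesis using mass_eq_0_iff filippov_solution_in_domain[OF sol] t0 t by auto
qed

definition rho :: real where
  "rho = \<kappa> / (\<kappa> + \<gamma>s)"

lemma rho_nonneg: "rho \<ge> 0"
  using \<kappa> \<gamma>s by (simp add: rho_def)

lemma rho_subcritical: "\<beta>E * \<nu> * \<nu>E * rho < \<delta>F * (\<nu>E + \<delta>E)"
  using subcritical \<kappa> \<gamma>s by (simp add: rho_def divide_less_eq mult.assoc)

lemma fraction_le_rho:
  assumes "y \<in> Dp" and pos: "y $ 2 + \<gamma>s * y $ 4 > 0"
  shows "y $ 2 / (y $ 2 + \<gamma>s * y $ 4) \<le> rho + max (gap2 y) 0 / (y $ 2 + \<gamma>s * y $ 4)"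
proof -
  define u where "u = y $ 2 - max (gap2 y) 0"
  have u: "u \<le> y $ 2" "u \<le> \<kappa> * y $ 4" by (auto simp: u_def gap2_def max_def)
  have "\<kappa> * u \<le> \<kappa> * y $ 2" using u \<kappa> by (simp add: mult_left_mono)
  moreover have "\<gamma>s * u \<le> \<gamma>s * (\<kappa> * y $ 4)" using u \<gamma>s by (simp add: mult_left_mono)
  ultimately have "u * (\<kappa> + \<gamma>s) \<le> \<kappa> * (y $ 2 + \<gamma>s * y $ 4)" by (simp add: algebra_simps)
  then have "u / (y $ 2 + \<gamma>s * y $ 4) \<le> rho"
    using pos \<kappa> \<gamma>s by (simp add: rho_def divide_simps mult.commute)
  moreover have "y $ 2 / (y $ 2 + \<gamma>s * y $ 4)
      = u / (y $ 2 + \<gamma>s * y $ 4) + max (gap2 y) 0 / (y $ 2 + \<gamma>s * y $ 4)"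
    by (simp add: u_def add_divide_distrib[symmetric])
  ultimately show ?thesis by linarith
qed

definition gap1_rate :: "real^4 \<Rightarrow> real^4 \<Rightarrow> real" where
  "gap1_rate y v = \<beta>E * v $ 3 * (1 - y $ 1 / K) - \<beta>E * y $ 3 * v $ 1 / K - (\<nu>E + \<delta>E) * v $ 1"

lemma has_real_derivative_gap1:
  assumes "(z has_vector_derivative v) (at s)"
  shows "((\<lambda>t. gap1 (z t)) has_real_derivative gap1_rate (z s) v) (at s)"
proof -
  have "((\<lambda>t. \<beta>E * z t $ 3 * (1 - z t $ 1 / K) - (\<nu>E + \<delta>E) * z t $ 1) has_real_derivative
      \<beta>E * v $ 3 * (1 - z s $ 1 / K) + (0 - v $ 1 / K) * (\<beta>E * z s $ 3) - (\<nu>E + \<delta>E) * v $ 1) (at s)"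
    by (intro DERIV_diff DERIV_mult DERIV_cmult DERIV_const DERIV_cdivide has_vector_derivative_nth[OF assms])
  then show ?thesis
    unfolding gap1_def by (rule DERIV_cong) (simp add: gap1_rate_def algebra_simps)
qed

lemma has_real_derivative_gap2:
  "(z has_vector_derivative v) (at s) \<Longrightarrow> ((\<lambda>t. gap2 (z t)) has_real_derivative gap2 v) (at s)"
  unfolding gap2_def by (intro DERIV_diff DERIV_cmult has_vector_derivative_nth)

lemma has_real_derivative_gap3:
  "(z has_vector_derivative v) (at s) \<Longrightarrow> ((\<lambda>t. gap3 (z t)) has_real_derivative gap3 v) (at s)"
  unfolding gap3_def by (intro DERIV_diff DERIV_cmult has_vector_derivative_nth)

lemma gap1_rate_le:
  assumes y: "y \<in> Dp" and gap1: "gap1 y \<ge> 0"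
    and m: "0 < m" "m \<le> y $ 2 + \<gamma>s * y $ 4" and R: "y $ 1 \<le> R"
  shows "gap1_rate y (X y) \<le> \<beta>E * \<nu>E * R / m * max (gap2 y) 0"
proof -
  define E F d q b where "E = y $ 1" and "F = y $ 3" and "d = y $ 2 + \<gamma>s * y $ 4"
    and "q = 1 - E / K" and "b = max (gap2 y) 0"
  have nonneg: "0 \<le> E" "0 \<le> F" "0 \<le> b" using y by (auto simp: mem_Dp_iff E_def F_def b_def)
  have "d > 0" "m \<le> d" using m by (auto simp: d_def)
  have q_le: "q \<le> 1" using nonneg rates_pos by (simp add: q_def)
  have feed: "(\<nu>E + \<delta>E) * E \<le> \<beta>E * F * q"
    using gap1 by (simp add: gap1_def E_def F_def q_def)
  have "q > 0"
  proof (rule ccontr)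
    assume "\<not> q > 0"
    then have "\<beta>E * F * q \<le> 0" using rates_pos nonneg by (simp add: mult_nonneg_nonpos)
    then have "(\<nu>E + \<delta>E) * E \<le> 0" using feed by linarith
    then have "E = 0" using nonneg rates_pos by (simp add: mult_le_0_iff)
    then show False using \<open>\<not> q > 0\<close> by (simp add: q_def)
  qed
  have "gap1_rate y (X y) \<le> \<beta>E * q * X y $ 3"
  proof -
    have "\<beta>E * F * gap1 y / K \<ge> 0" "(\<nu>E + \<delta>E) * gap1 y \<ge> 0"
      using rates_pos nonneg gap1 by simp_all
    then show ?thesis by (simp add: gap1_rate_def X_nth_gap E_def F_def q_def)
  qed
  also have "\<dots> = \<beta>E * \<nu> * \<nu>E * E * q * (y $ 2 / d) - \<delta>F * (\<beta>E * F * q)"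
    by (simp add: X_nth E_def F_def d_def algebra_simps)
  also have "\<dots> \<le> \<beta>E * \<nu> * \<nu>E * E * q * (rho + b / d) - \<delta>F * ((\<nu>E + \<delta>E) * E)"
    using fraction_le_rho[OF y \<open>d > 0\<close>[unfolded d_def]] feed \<open>q > 0\<close> nonneg rates_pos \<nu>
    by (intro diff_mono mult_left_mono) (simp_all add: d_def b_def)
  also have "\<dots> = E * (q * (\<beta>E * \<nu> * \<nu>E * rho) - \<delta>F * (\<nu>E + \<delta>E))
      + (\<beta>E * \<nu>E * E) * (q * \<nu>) * b / d"
    by (simp add: algebra_simps)
  also have "\<dots> \<le> E * 0 + (\<beta>E * \<nu>E * R) * 1 * b / m"
  proof (intro add_mono mult_left_mono divide_mono mult_mono)
    have "q * (\<beta>E * \<nu> * \<nu>E * rho) \<le> \<beta>E * \<nu> * \<nu>E * rho"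
      using q_le \<open>q > 0\<close> rho_nonneg rates_pos \<nu> by (intro mult_left_le_one_le) auto
    then show "q * (\<beta>E * \<nu> * \<nu>E * rho) - \<delta>F * (\<nu>E + \<delta>E) \<le> 0"
      using rho_subcritical by linarith
    show "q * \<nu> \<le> 1" using q_le \<open>q > 0\<close> \<nu> by (simp add: mult_le_one)
  qed (use R nonneg \<open>q > 0\<close> \<nu> rates_pos \<open>m \<le> d\<close> m in \<open>simp_all add: E_def\<close>)
  finally show ?thesis by (simp add: b_def)
qed

lemma gap2_rate_le:
  assumes "y \<in> Dp" and "gap2 y \<ge> 0"
  shows "gap2 (X y) \<le> max (gap3 y) 0"
proof -
  have "\<kappa> * y $ 4 * (\<delta>s - k) \<le> y $ 2 * (\<delta>s - k)"
    using assms k by (intro mult_right_mono) (auto simp: gap2_def)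
  moreover have "(\<delta>s - k) * y $ 2 \<le> \<kappa> * k * y $ 2"
    using assms k by (intro mult_right_mono) (auto simp: mem_Dp_iff)
  ultimately have "\<kappa> * (k * (y $ 2 + y $ 4) - \<delta>s * y $ 4) \<ge> 0" by (simp add: algebra_simps)
  then show ?thesis by (simp add: gap2_def X_nth_gap X_nth)
qed

lemma gap3_rate_le:
  assumes "gap3 y \<ge> 0"
  shows "gap3 (X y) \<le> (1 - \<nu>) * \<nu>E * max (gap1 y) 0"
proof -
  have "(1 - \<nu>) * \<nu>E * gap1 y \<le> (1 - \<nu>) * \<nu>E * max (gap1 y) 0"
    using \<nu> rates_pos by (intro mult_left_mono) auto
  moreover have "\<delta>M * gap3 y \<ge> 0" using assms rates_pos by simp
  ultimately show ?thesis by (simp add: gap3_def X_nth_gap)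
qed

lemma excess_eventually_right_le:
  assumes der: "(z has_vector_derivative X (z s)) (at s)" and y: "z s \<in> Dp"
    and m: "0 < m" "m \<le> z s $ 2 + \<gamma>s * z s $ 4" and R: "z s $ 1 \<le> R"
    and L: "\<beta>E * \<nu>E * R / m \<le> L" "1 \<le> L" "(1 - \<nu>) * \<nu>E \<le> L" and "e > 0"
  shows "\<forall>\<^sub>F t in at_right s. excess (z t) - excess (z s) \<le> (L * excess (z s) + e) * (t - s)"
proof -
  define a b c where "a = max (gap1 (z s)) 0" and "b = max (gap2 (z s)) 0" and "c = max (gap3 (z s)) 0"
  have "R \<ge> 0" using R y by (simp add: mem_Dp_iff)
  then have B1: "0 \<le> \<beta>E * \<nu>E * R / m * b" using rates_pos m by (simp add: b_def)
  have B3: "0 \<le> (1 - \<nu>) * \<nu>E * a" using rates_pos \<nu> by (simp add: a_def)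
  have B2: "0 \<le> c" by (simp add: c_def)
  have "e / 3 > 0" using \<open>e > 0\<close> by simp
  have ev1: "\<forall>\<^sub>F t in at_right s. max (gap1 (z t)) 0 - a \<le> (\<beta>E * \<nu>E * R / m * b + e / 3) * (t - s)"
    unfolding a_def b_def
    by (rule has_real_derivative_max_0_eventually_right_le[OF has_real_derivative_gap1[OF der]
          gap1_rate_le[OF y _ m R] B1[unfolded b_def] \<open>e / 3 > 0\<close>])
  have ev2: "\<forall>\<^sub>F t in at_right s. max (gap2 (z t)) 0 - b \<le> (c + e / 3) * (t - s)"
    unfolding b_def c_def
    by (rule has_real_derivative_max_0_eventually_right_le[OF has_real_derivative_gap2[OF der]
          gap2_rate_le[OF y] B2[unfolded c_def] \<open>e / 3 > 0\<close>])
  have ev3: "\<forall>\<^sub>F t in at_right s. max (gap3 (z t)) 0 - c \<le> ((1 - \<nu>) * \<nu>E * a + e / 3) * (t - s)"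
    unfolding a_def c_def
    by (rule has_real_derivative_max_0_eventually_right_le[OF has_real_derivative_gap3[OF der]
          gap3_rate_le B3[unfolded a_def] \<open>e / 3 > 0\<close>])
  have "\<beta>E * \<nu>E * R / m * b \<le> L * b" "(1 - \<nu>) * \<nu>E * a \<le> L * a"
    using L by (intro mult_right_mono; simp add: a_def b_def)+
  moreover have "c \<le> L * c" using L B2 by (simp add: mult_le_cancel_right1)
  ultimately have "\<beta>E * \<nu>E * R / m * b + c + (1 - \<nu>) * \<nu>E * a \<le> L * (a + b + c)"
    unfolding distrib_left by linarith
  moreover have "excess (z s) = a + b + c" by (simp add: excess_def a_def b_def c_def)
  ultimately have bound: "\<beta>E * \<nu>E * R / m * b + c + (1 - \<nu>) * \<nu>E * a \<le> L * excess (z s)"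
    by simp
  from ev1 ev2 ev3 eventually_at_right_less[of s] show ?thesis
  proof eventually_elim
    case (elim t)
    have "excess (z t) - excess (z s)
        = (max (gap1 (z t)) 0 - a) + (max (gap2 (z t)) 0 - b) + (max (gap3 (z t)) 0 - c)"
      by (simp add: excess_def a_def b_def c_def)
    also have "\<dots> \<le> (\<beta>E * \<nu>E * R / m * b + e / 3) * (t - s) + (c + e / 3) * (t - s)
        + ((1 - \<nu>) * \<nu>E * a + e / 3) * (t - s)"
      using elim by (intro add_mono)
    also have "\<dots> = (\<beta>E * \<nu>E * R / m * b + c + (1 - \<nu>) * \<nu>E * a + e) * (t - s)"
      by (simp add: field_simps)
    also have "\<dots> \<le> (L * excess (z s) + e) * (t - s)"
      using bound elim by (intro mult_right_mono) auto
    finally show ?case .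
  qed
qed

lemma calm_gap_solution:
  assumes "filippov_solution X Dp z" and "t \<ge> 0"
  shows "calm {0..} (\<lambda>s. gap1 (z s)) t" "calm {0..} (\<lambda>s. gap2 (z s)) t"
    "calm {0..} (\<lambda>s. gap3 (z s)) t"
  unfolding gap1_def gap2_def gap3_def
  by (intro calm_diff calm_mult calm_const calm_divide_const filippov_solution_calm[OF assms])+

lemma stays_in_M_while_bounded:
  assumes sol: "filippov_solution X Dp z" and t0: "t0 \<ge> 0" "z t0 \<in> \<M>"
    and "m > 0" "R \<ge> 0"
    and bounded: "\<And>t. t \<in> {t0<..<t0 + h} \<Longrightarrow> m \<le> z t $ 2 + \<gamma>s * z t $ 4 \<and> z t $ 1 \<le> R"
    and t: "t \<in> {t0..t0 + h}"
  shows "z t \<in> \<M>"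
proof -
  obtain N where N: "negligible N" and der: "\<And>s. 0 < s \<Longrightarrow> s \<notin> N \<Longrightarrow>
      \<exists>v. (z has_vector_derivative v) (at s) \<and> v \<in> filippov_set X Dp (z s)"
    using filippov_solution_derivative_ae[OF sol] by blast
  define L where "L = \<beta>E * \<nu>E * R / m + 1 + (1 - \<nu>) * \<nu>E"
  have L: "\<beta>E * \<nu>E * R / m \<le> L" "1 \<le> L" "(1 - \<nu>) * \<nu>E \<le> L"
    using rates_pos \<nu> \<open>m > 0\<close> \<open>R \<ge> 0\<close> by (simp_all add: L_def)
  have "excess (z t) = 0"
  proof (rule dini_gronwall_zero[of t0 "t0 + h" "\<lambda>t. excess (z t)" L N])
    show "calm {t0..t0 + h} (\<lambda>t. excess (z t)) s" if "s \<in> {t0..t0 + h}" for s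
    proof (rule calm_subset)
      show "calm {0..} (\<lambda>t. excess (z t)) s"
        unfolding excess_def using that t0 calm_gap_solution[OF sol, of s]
        by (intro calm_add calm_max_0) auto
    qed (use t0 in auto)
    show "excess (z t0) = 0" using t0(2) by (simp add: mem_M_iff_excess)
  next
    fix s e :: real assume s: "s \<in> {t0<..<t0 + h}" "s \<notin> N" "e > 0"
    then have "0 < s" using t0 by simp
    then obtain v where v: "(z has_vector_derivative v) (at s)" "v \<in> filippov_set X Dp (z s)"
      using der s(2) by blast
    have "v = X (z s)" using filippov_set_X[OF v(2)] bounded[OF s(1)] \<open>m > 0\<close> by simp
    with v(1) show "\<forall>\<^sub>F u in at_right s. excess (z u) - excess (z s) \<le> (L * excess (z s) + e) * (u - s)"
      using filippov_solution_in_domain[OF sol, of s] bounded[OF s(1)] \<open>0 < s\<close>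
      by (intro excess_eventually_right_le[OF _ _ \<open>m > 0\<close> _ _ L s(3)]) auto
  qed (use t N L in \<open>auto simp: excess_def\<close>)
  then show ?thesis
    using filippov_solution_in_domain[OF sol] t t0(1) by (simp add: mem_M_iff_excess)
qed

lemma locally_invariant:
  assumes sol: "filippov_solution X Dp z" and t0: "t0 \<ge> 0" "z t0 \<in> \<M>" "z t0 \<noteq> 0"
  obtains h where "h > 0" "\<And>t. t \<in> {t0..t0 + h} \<Longrightarrow> z t \<in> \<M>"
proof -
  define m where "m = (z t0 $ 2 + \<gamma>s * z t0 $ 4) / 2"
  define R where "R = z t0 $ 1 + 1"
  have "m > 0" using M_denominator_pos[OF t0(2,3)] by (simp add: m_def)
  have "R \<ge> 0" using filippov_solution_in_domain[OF sol t0(1)] by (simp add: R_def mem_Dp_iff)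
  have "continuous (at t0 within {0..}) (\<lambda>t. z t $ 2 + \<gamma>s * z t $ 4)"
    "continuous (at t0 within {0..}) (\<lambda>t. z t $ 1)"
    by (intro calm_imp_continuous_within calm_add calm_mult calm_const filippov_solution_calm[OF sol] t0)+
  then have "\<forall>\<^sub>F t in at t0 within {0..}. m < z t $ 2 + \<gamma>s * z t $ 4 \<and> z t $ 1 < R"
    using \<open>m > 0\<close> unfolding continuous_within m_def R_def
    by (intro eventually_conj order_tendstoD) auto
  then have "\<forall>\<^sub>F t in at_right t0. m < z t $ 2 + \<gamma>s * z t $ 4 \<and> z t $ 1 < R"
    by (rule filter_leD[rotated]) (use t0 in \<open>intro at_le; auto\<close>)
  then obtain b where "b > t0"
    and near: "\<And>t. t0 < t \<Longrightarrow> t < b \<Longrightarrow> m < z t $ 2 + \<gamma>s * z t $ 4 \<and> z t $ 1 < R"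
    unfolding eventually_at_right_field by blast
  define h where "h = b - t0"
  show ?thesis
  proof (rule that[of h])
    show "h > 0" using \<open>b > t0\<close> by (simp add: h_def)
    show "z t \<in> \<M>" if "t \<in> {t0..t0 + h}" for t
      using that near \<open>m > 0\<close> \<open>R \<ge> 0\<close>
      by (intro stays_in_M_while_bounded[OF sol t0(1,2), where h = h]) (auto simp: h_def less_imp_le)
  qed
qed

lemma forward_invariant:
  assumes sol: "filippov_solution X Dp z" and z0: "z 0 \<in> \<M>" and "t \<ge> 0"
  shows "z t \<in> \<M>"
proof (rule ccontr)
  define Exit where "Exit = {t. 0 \<le> t \<and> z t \<notin> \<M>}"
  assume "z t \<notin> \<M>"
  then have ne: "Exit \<noteq> {}" using \<open>t \<ge> 0\<close> by (auto simp: Exit_def)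
  have bdd: "bdd_below Exit" by (auto simp: Exit_def bdd_below_def)
  define T where "T = Inf Exit"
  have "T \<ge> 0" unfolding T_def by (rule cInf_greatest[OF ne]) (auto simp: Exit_def)
  have lower: "T \<le> u" if "u \<in> Exit" for u unfolding T_def by (rule cInf_lower[OF that bdd])
  have before: "z u \<in> \<M>" if "u \<in> {0..<T}" for u
    using lower[of u] that by (auto simp: Exit_def)
  have "z T \<in> \<M>"
  proof (cases "T = 0")
    case False
    then have "T > 0" using \<open>T \<ge> 0\<close> by simp
    have nonpos_at_T: "g (z T) \<le> 0"
      if calm: "\<And>t. t \<ge> 0 \<Longrightarrow> calm {0..} (\<lambda>s. g (z s)) t" and M: "\<And>y. y \<in> \<M> \<Longrightarrow> g y \<le> 0" for g
    proof (rule continuous_on_nonpos_at_right_end[OF _ _ \<open>T > 0\<close>])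
      show "continuous_on {0..T} (\<lambda>s. g (z s))"
        by (rule calm_imp_continuous_on, rule calm_subset[OF calm]) auto
      show "g (z u) \<le> 0" if "u \<in> {0..<T}" for u using M before that by blast
    qed
    have gaps: "gap1 y \<le> 0" "gap2 y \<le> 0" "gap3 y \<le> 0" if "y \<in> \<M>" for y
      using that by (simp_all add: mem_M_iff)
    have "gap1 (z T) \<le> 0" "gap2 (z T) \<le> 0" "gap3 (z T) \<le> 0"
      using nonpos_at_T[OF calm_gap_solution(1)[OF sol] gaps(1)]
        nonpos_at_T[OF calm_gap_solution(2)[OF sol] gaps(2)]
        nonpos_at_T[OF calm_gap_solution(3)[OF sol] gaps(3)] by blast+
    then show ?thesis using filippov_solution_in_domain[OF sol \<open>T \<ge> 0\<close>] by (simp add: mem_M_iff)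
  qed (use z0 in simp)
  obtain h where "h > 0" and after: "\<And>u. u \<in> {T..T + h} \<Longrightarrow> z u \<in> \<M>"
  proof (cases "z T = 0")
    case True
    then show ?thesis
      using that[of 1] solution_stays_zero[OF sol \<open>T \<ge> 0\<close>] zero_mem_M by auto
  next
    case False
    then show ?thesis using locally_invariant[OF sol \<open>T \<ge> 0\<close> \<open>z T \<in> \<M>\<close>] that by blast
  qed
  have "Inf Exit < T + h" using \<open>h > 0\<close> by (simp add: T_def)
  then obtain u where "u \<in> Exit" "u < T + h" using cInf_less_iff[OF ne bdd] by blast
  then show False using after[of u] lower[of u] by (auto simp: Exit_def)
qed

text \<open>The weight \<open>wE\<close> may be any number
  strictly between \<open>\<nu> \<nu>E rho / (\<nu>E + \<delta>E)\<close> and \<open>\<delta>F / \<beta>E\<close> (ordered by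
  \<open>rho_subcritical\<close>), so that \<open>E\<close> and \<open>F\<close> decay at rates \<open>cE\<close> and \<open>cF\<close>; then \<open>wM\<close>
  spends half of the decay of \<open>E\<close> on the inflow into \<open>M\<close>, and \<open>wMs\<close> half of the decay
  of \<open>M\<close> on the inflow into \<open>M\<^sub>s\<close>.\<close>
definition wE :: real where "wE = (\<nu> * \<nu>E * rho / (\<nu>E + \<delta>E) + \<delta>F / \<beta>E) / 2"
definition cE :: real where "cE = wE * (\<nu>E + \<delta>E) - \<nu> * \<nu>E * rho"
definition cF :: real where "cF = \<delta>F - wE * \<beta>E"
definition wM :: real where "wM = cE / (2 * ((1 - \<nu>) * \<nu>E))"
definition wMs :: real where "wMs = wM * \<delta>M / (2 * k)"
definition lyap :: "real^4" where "lyap = vector [wE, wM, 1, wMs]"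
definition mu :: real where "mu = min (min (cE / 2) cF) (min (wM * \<delta>M / 2) (wMs * (\<delta>s - k)))"

lemma lyapunov_constants_pos: "0 < cE" "0 < cF" "0 < wE" "0 < wM" "0 < wMs" "0 < mu"
proof -
  define lo hi where "lo = \<nu> * \<nu>E * rho / (\<nu>E + \<delta>E)" and "hi = \<delta>F / \<beta>E"
  have "lo < hi"
    using rho_subcritical rates_pos by (simp add: lo_def hi_def field_simps)
  moreover have "wE = (lo + hi) / 2" by (simp add: wE_def lo_def hi_def)
  ultimately have "lo < wE" "wE < hi" by (simp_all add: field_simps)
  moreover have "lo \<ge> 0" using rho_nonneg \<nu> rates_pos by (simp add: lo_def)
  moreover have "cE = (\<nu>E + \<delta>E) * (wE - lo)" "cF = \<beta>E * (hi - wE)"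
    using rates_pos by (simp_all add: cE_def cF_def lo_def hi_def field_simps)
  ultimately show "0 < cE" "0 < cF" "0 < wE" using rates_pos by simp_all
  then show "0 < wM" using \<nu> rates_pos by (simp add: wM_def)
  then show "0 < wMs" using rates_pos k by (simp add: wMs_def)
  then show "0 < mu" using \<open>0 < cE\<close> \<open>0 < cF\<close> \<open>0 < wM\<close> rates_pos k by (simp add: mu_def)
qed

lemma lyap_mem_Dp: "lyap \<in> Dp"
  using lyapunov_constants_pos by (simp add: lyap_def mem_Dp_iff)

lemma lyapunov_decrease:
  assumes y: "y \<in> \<M>" "y $ 2 + \<gamma>s * y $ 4 > 0"
  shows "inner lyap (X y) \<le> - mu * mass y"
proof -
  have nonneg: "0 \<le> y $ 1" "0 \<le> y $ 2" "0 \<le> y $ 3" "0 \<le> y $ 4" and "gap2 y \<le> 0"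
    using y(1) by (auto simp: mem_M_iff mem_Dp_iff)
  note pos = lyapunov_constants_pos
  have x1: "X y $ 1 \<le> \<beta>E * y $ 3 - (\<nu>E + \<delta>E) * y $ 1"
    using rates_pos nonneg by (simp add: X_nth algebra_simps)
  have "y $ 2 / (y $ 2 + \<gamma>s * y $ 4) \<le> rho"
    using fraction_le_rho[of y] y \<open>gap2 y \<le> 0\<close> by (simp add: mem_M_iff)
  then have "\<nu> * \<nu>E * y $ 1 * (y $ 2 / (y $ 2 + \<gamma>s * y $ 4)) \<le> \<nu> * \<nu>E * y $ 1 * rho"
    using \<nu> rates_pos nonneg by (intro mult_left_mono) auto
  then have x3: "X y $ 3 \<le> \<nu> * \<nu>E * rho * y $ 1 - \<delta>F * y $ 3"
    unfolding X_nth by (simp add: mult_ac)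
  have "inner lyap (X y) = wE * X y $ 1 + wM * X y $ 2 + X y $ 3 + wMs * X y $ 4"
    by (simp add: inner_4 lyap_def)
  also have "\<dots> \<le> wE * (\<beta>E * y $ 3 - (\<nu>E + \<delta>E) * y $ 1) + wM * X y $ 2
      + (\<nu> * \<nu>E * rho * y $ 1 - \<delta>F * y $ 3) + wMs * X y $ 4"
  proof -
    have "wE * X y $ 1 \<le> wE * (\<beta>E * y $ 3 - (\<nu>E + \<delta>E) * y $ 1)"
      using x1 pos by (simp add: mult_left_mono)
    then show ?thesis using x3 by linarith
  qed
  also have "\<dots> = - cE * y $ 1 + wM * ((1 - \<nu>) * \<nu>E) * y $ 1 - wM * \<delta>M * y $ 2 - cF * y $ 3
      + (wMs * k) * y $ 2 - wMs * (\<delta>s - k) * y $ 4"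
    by (simp add: X_nth cE_def cF_def algebra_simps)
  also have "\<dots> = - (cE / 2) * y $ 1 - (wM * \<delta>M / 2) * y $ 2 - cF * y $ 3 - wMs * (\<delta>s - k) * y $ 4"
  proof -
    have E: "wM * ((1 - \<nu>) * \<nu>E) = cE / 2" and M: "wMs * k = wM * \<delta>M / 2"
      using \<nu> rates_pos k by (simp_all add: wM_def wMs_def)
    show ?thesis unfolding E M by (simp add: algebra_simps)
  qed
  also have "\<dots> \<le> - mu * mass y"
  proof -
    have "mu * y $ 1 \<le> (cE / 2) * y $ 1" "mu * y $ 2 \<le> (wM * \<delta>M / 2) * y $ 2"
      "mu * y $ 3 \<le> cF * y $ 3" "mu * y $ 4 \<le> (wMs * (\<delta>s - k)) * y $ 4"
      using nonneg by (intro mult_right_mono; simp add: mu_def)+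
    then show ?thesis by (simp add: mass_def algebra_simps)
  qed
  finally show ?thesis .
qed

lemma lyapunov_decrease_filippov:
  assumes sol: "filippov_solution X Dp z" and z0: "z 0 \<in> \<M>" and "s > 0"
    and v: "v \<in> filippov_set X Dp (z s)"
  shows "inner lyap v \<le> - mu * mass (z s)"
proof (cases "z s = 0")
  case True
  then show ?thesis using filippov_set_linear_growth[OF v lyap_mem_Dp] by (simp add: mass_def)
next
  case False
  have "z s \<in> \<M>" using forward_invariant[OF sol z0] \<open>s > 0\<close> by simp
  then have "z s $ 2 + \<gamma>s * z s $ 4 > 0" using M_denominator_pos False by blast
  then show ?thesis using filippov_set_X[OF v] lyapunov_decrease[OF \<open>z s \<in> \<M>\<close>] by simp
qed

definition lyap_min :: real where "lyap_min = min (min wE wM) (min 1 wMs)"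
definition decay_rate :: real where "decay_rate = mu / mass lyap"

lemma lyapunov_bounds_pos: "lyap_min > 0" "mass lyap > 0" "decay_rate > 0"
  using lyapunov_constants_pos
  by (simp_all add: lyap_min_def decay_rate_def mass_def lyap_def)

lemma lyapunov_bounds:
  assumes "y \<in> Dp"
  shows "lyap_min * mass y \<le> inner lyap y" "inner lyap y \<le> mass lyap * mass y"
proof -
  have y: "0 \<le> y $ 1" "0 \<le> y $ 2" "0 \<le> y $ 3" "0 \<le> y $ 4" using assms by (auto simp: mem_Dp_iff)
  have "lyap_min \<le> wE" "lyap_min \<le> wM" "lyap_min \<le> 1" "lyap_min \<le> wMs" by (auto simp: lyap_min_def)
  then have "lyap_min * y $ 1 \<le> wE * y $ 1" "lyap_min * y $ 2 \<le> wM * y $ 2"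
    "lyap_min * y $ 3 \<le> 1 * y $ 3" "lyap_min * y $ 4 \<le> wMs * y $ 4"
    using y by (meson mult_right_mono)+
  then show "lyap_min * mass y \<le> inner lyap y"
    by (simp add: inner_4 lyap_def mass_def distrib_left)
  have "wE \<le> mass lyap" "wM \<le> mass lyap" "1 \<le> mass lyap" "wMs \<le> mass lyap"
    using lyapunov_constants_pos by (simp_all add: mass_def lyap_def)
  then have "wE * y $ 1 \<le> mass lyap * y $ 1" "wM * y $ 2 \<le> mass lyap * y $ 2"
    "1 * y $ 3 \<le> mass lyap * y $ 3" "wMs * y $ 4 \<le> mass lyap * y $ 4"
    using y by (meson mult_right_mono)+
  then show "inner lyap y \<le> mass lyap * mass y"
    by (simp add: inner_4 lyap_def mass_def distrib_left)
qed

lemma lyapunov_exponential_decay: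
  assumes sol: "filippov_solution X Dp z" and z0: "z 0 \<in> \<M>" and "t \<ge> 0"
  shows "inner lyap (z t) \<le> exp (- decay_rate * t) * inner lyap (z 0)"
proof -
  obtain N where N: "negligible N" and der: "\<And>s. 0 < s \<Longrightarrow> s \<notin> N \<Longrightarrow>
      \<exists>v. (z has_vector_derivative v) (at s) \<and> v \<in> filippov_set X Dp (z s)"
    using filippov_solution_derivative_ae[OF sol] by blast
  define r where "r = decay_rate"
  define G where "G u = exp (r * u) * inner lyap (z u)" for u
  have dexp: "((\<lambda>u. exp (r * u)) has_real_derivative exp (r * u) * r) (at u)" for u
    using DERIV_fun_exp[OF DERIV_cmult_Id[of r u UNIV]] by simp
  have "G t \<le> G 0"
  proof (rule dini_nonincreasing[OF \<open>t \<ge> 0\<close> _ N])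
    show "calm {0..t} G u" if "u \<in> {0..t}" for u
    proof (rule calm_subset)
      show "calm {0..} G u" unfolding G_def inner_4 using that
        by (intro calm_mult calm_add has_real_derivative_imp_calm[OF dexp] calm_const
            filippov_solution_calm[OF sol]) auto
    qed auto
  next
    fix s e :: real assume s: "s \<in> {0<..<t}" "s \<notin> N" "e > 0"
    then obtain v where v: "(z has_vector_derivative v) (at s)" "v \<in> filippov_set X Dp (z s)"
      using der by force
    have "((\<lambda>u. inner lyap (z u)) has_real_derivative inner lyap v) (at s)"
      unfolding inner_4 by (intro DERIV_add DERIV_cmult has_vector_derivative_nth[OF v(1)])
    then have "(G has_real_derivative exp (r * s) * r * inner lyap (z s) + inner lyap v * exp (r * s)) (at s)"
      unfolding G_def by (rule DERIV_mult[OF dexp])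
    then have dG: "(G has_real_derivative exp (r * s) * (r * inner lyap (z s) + inner lyap v)) (at s)"
      by (rule DERIV_cong) (simp add: algebra_simps)
    have "r * inner lyap (z s) \<le> r * (mass lyap * mass (z s))"
      using lyapunov_bounds(2) filippov_solution_in_domain[OF sol] s lyapunov_bounds_pos
      by (simp add: r_def)
    also have "\<dots> = mu * mass (z s)"
      using lyapunov_bounds_pos by (simp add: r_def decay_rate_def)
    finally have "r * inner lyap (z s) + inner lyap v \<le> 0"
      using lyapunov_decrease_filippov[OF sol z0 _ v(2)] s by simp
    then have "exp (r * s) * (r * inner lyap (z s) + inner lyap v) \<le> 0"
      by (simp add: mult_nonneg_nonpos)
    with dG have "\<forall>\<^sub>F u in at_right s. G u - G s \<le> (0 + e) * (u - s)"
      using s(3) by (rule has_real_derivative_eventually_right_le)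
    then show "\<forall>\<^sub>F u in at_right s. G u - G s \<le> e * (u - s)" by simp
  qed
  then have "exp (r * t) * inner lyap (z t) \<le> inner lyap (z 0)" by (simp add: G_def)
  then have "exp (- r * t) * (exp (r * t) * inner lyap (z t)) \<le> exp (- r * t) * inner lyap (z 0)"
    by (intro mult_left_mono) auto
  then show ?thesis by (simp add: r_def mult.assoc[symmetric] exp_add[symmetric])
qed

lemma solution_exponential_bound:
  assumes sol: "filippov_solution X Dp z" and z0: "z 0 \<in> \<M>" and "t \<ge> 0"
  shows "norm (z t) \<le> 4 * mass lyap / lyap_min * norm (z 0) * exp (- decay_rate * t)"
proof -
  have D: "z t \<in> Dp" "z 0 \<in> Dp" using filippov_solution_in_domain[OF sol] \<open>t \<ge> 0\<close> by auto
  note pos = lyapunov_bounds_pos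
  have "norm (z t) \<le> mass (z t)" by (rule norm_le_mass[OF D(1)])
  also have "\<dots> \<le> inner lyap (z t) / lyap_min"
    using lyapunov_bounds(1)[OF D(1)] pos by (simp add: le_divide_eq mult.commute)
  also have "\<dots> \<le> exp (- decay_rate * t) * inner lyap (z 0) / lyap_min"
    using lyapunov_exponential_decay[OF sol z0 \<open>t \<ge> 0\<close>] pos by (simp add: divide_right_mono)
  also have "\<dots> \<le> exp (- decay_rate * t) * (mass lyap * (4 * norm (z 0))) / lyap_min"
  proof -
    have "inner lyap (z 0) \<le> mass lyap * (4 * norm (z 0))"
      using lyapunov_bounds(2)[OF D(2)] mass_le_norm[of "z 0"] pos
      by (meson mult_left_mono less_imp_le order_trans)
    then show ?thesis using pos by (intro divide_right_mono mult_left_mono) auto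
  qed
  also have "\<dots> = 4 * mass lyap / lyap_min * norm (z 0) * exp (- decay_rate * t)"
    by (simp add: field_simps)
  finally show ?thesis .
qed

lemma filippov_GAS_M: "filippov_GAS X Dp \<M>"
  unfolding filippov_GAS_def
proof (intro conjI allI impI)
  define C where "C = 4 * mass lyap / lyap_min"
  have "C > 0" using lyapunov_bounds_pos by (simp add: C_def)
  have bound: "norm (z t) \<le> C * norm (z 0)" if "filippov_solution X Dp z" "z 0 \<in> \<M>" "t \<ge> 0" for z t
  proof -
    have "exp (- decay_rate * t) \<le> 1" using lyapunov_bounds_pos \<open>t \<ge> 0\<close> by simp
    then have "C * norm (z 0) * exp (- decay_rate * t) \<le> C * norm (z 0)"
      using \<open>C > 0\<close> by (intro mult_left_le) auto
    then show ?thesis using solution_exponential_bound[OF that] by (simp add: C_def)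
  qed
  fix \<epsilon> :: real assume "\<epsilon> > 0"
  show "\<exists>\<delta>>0. \<forall>z. filippov_solution X Dp z \<and> z 0 \<in> \<M> \<and> norm (z 0) < \<delta> \<longrightarrow> (\<forall>t>0. norm (z t) < \<epsilon>)"
  proof (intro exI[of _ "\<epsilon> / C"] conjI allI impI)
    fix z :: "real \<Rightarrow> real^4" and t :: real
    assume z: "filippov_solution X Dp z \<and> z 0 \<in> \<M> \<and> norm (z 0) < \<epsilon> / C" and "t > 0"
    then have "norm (z t) \<le> C * norm (z 0)" using bound by simp
    also have "\<dots> < \<epsilon>" using z \<open>C > 0\<close> by (simp add: less_divide_eq mult.commute)
    finally show "norm (z t) < \<epsilon>" .
  qed (use \<open>\<epsilon> > 0\<close> \<open>C > 0\<close> in simp)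
next
  fix z :: "real \<Rightarrow> real^4" assume z: "filippov_solution X Dp z \<and> z 0 \<in> \<M>"
  define C where "C = 4 * mass lyap / lyap_min * norm (z 0)"
  show "(z \<longlongrightarrow> 0) at_top"
  proof (rule Lim_null_comparison)
    show "\<forall>\<^sub>F t in at_top. norm (z t) \<le> C * exp (- decay_rate * t)"
      using eventually_ge_at_top[of 0]
      by eventually_elim (use solution_exponential_bound z in \<open>simp add: C_def\<close>)
    have "((\<lambda>t. exp (- decay_rate * t)) \<longlongrightarrow> 0) at_top"
      using lyapunov_bounds_pos(3) by real_asymp
    then show "((\<lambda>t. C * exp (- decay_rate * t)) \<longlongrightarrow> 0) at_top"
      by (simp add: tendsto_mult_right_zero)
  qed
qed

end

lemma sterile_insect_feedbackI:
  fixes \<beta>E \<nu>E \<delta>E \<delta>M \<delta>F \<delta>s K \<nu> \<gamma>s k \<kappa> :: real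
  assumes rates_pos: "\<beta>E > 0" "\<nu>E > 0" "\<delta>E > 0" "\<delta>M > 0" "\<delta>F > 0" "\<delta>s > 0" "K > 0"
    and \<nu>: "0 < \<nu>" "\<nu> < 1" and \<gamma>s: "0 < \<gamma>s" and \<kappa>: "\<kappa> > 0"
    and R0: "\<beta>E * \<nu> * \<nu>E / (\<delta>F * (\<nu>E + \<delta>E)) > 1"
    and k_lo: "(\<beta>E * \<nu> * \<nu>E - (\<nu>E + \<delta>E) * \<delta>F)
                / (\<beta>E * \<nu> * \<nu>E - (1 - \<gamma>s) * (\<nu>E + \<delta>E) * \<delta>F) * \<delta>s < k"
    and k_hi: "k < \<delta>s"
    and kap_lo: "(\<delta>s - k) / k \<le> \<kappa>"
    and kap_hi: "\<kappa> < \<gamma>s * \<delta>F * (\<nu>E + \<delta>E) / (\<beta>E * \<nu> * \<nu>E - \<delta>F * (\<nu>E + \<delta>E))"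
  shows "sterile_insect_feedback \<beta>E \<nu>E \<delta>E \<delta>M \<delta>F \<delta>s K \<nu> \<gamma>s k \<kappa>"
proof
  have supercritical: "\<beta>E * \<nu> * \<nu>E - \<delta>F * (\<nu>E + \<delta>E) > 0"
    using R0 rates_pos by (simp add: less_divide_eq)
  moreover have "(1 - \<gamma>s) * (\<nu>E + \<delta>E) * \<delta>F \<le> (\<nu>E + \<delta>E) * \<delta>F"
    using rates_pos \<gamma>s by (simp add: mult_le_cancel_right1 mult.assoc)
  ultimately have "0 < (\<beta>E * \<nu> * \<nu>E - (\<nu>E + \<delta>E) * \<delta>F)
      / (\<beta>E * \<nu> * \<nu>E - (1 - \<gamma>s) * (\<nu>E + \<delta>E) * \<delta>F) * \<delta>s"
    using \<open>\<delta>s > 0\<close> by (simp add: mult.commute)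
  then show "0 < k" using k_lo by linarith
  then show "\<delta>s - k \<le> \<kappa> * k" using kap_lo by (simp add: divide_le_eq)
  have "\<kappa> * (\<beta>E * \<nu> * \<nu>E - \<delta>F * (\<nu>E + \<delta>E)) < \<gamma>s * \<delta>F * (\<nu>E + \<delta>E)"
    using kap_hi supercritical by (simp add: pos_less_divide_eq)
  then show "\<beta>E * \<nu> * \<nu>E * \<kappa> < \<delta>F * (\<nu>E + \<delta>E) * (\<kappa> + \<gamma>s)"
    by (simp add: algebra_simps)
qed (use rates_pos \<nu> \<gamma>s \<kappa> k_hi in auto)

theorem mainTheorem10:
  fixes \<beta>E \<nu>E \<delta>E \<delta>M \<delta>F \<delta>s K \<nu> \<gamma>s k \<kappa> :: real
  assumes "\<beta>E > 0" "\<nu>E > 0" "\<delta>E > 0" "\<delta>M > 0" "\<delta>F > 0" "\<delta>s > 0" "K > 0"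
    and "0 < \<nu>" "\<nu> < 1" and "0 < \<gamma>s" "\<gamma>s \<le> 1" and "\<delta>s \<ge> \<delta>M"
    and R0: "\<beta>E * \<nu> * \<nu>E / (\<delta>F * (\<nu>E + \<delta>E)) > 1"
    and k_lo: "(\<beta>E * \<nu> * \<nu>E - (\<nu>E + \<delta>E) * \<delta>F)
                / (\<beta>E * \<nu> * \<nu>E - (1 - \<gamma>s) * (\<nu>E + \<delta>E) * \<delta>F) * \<delta>s < k"
    and k_hi: "k < \<delta>s"
    and "\<kappa> > 0"
    and kap_lo: "(\<delta>s - k) / k \<le> \<kappa>"
    and kap_hi: "\<kappa> < \<gamma>s * \<delta>F * (\<nu>E + \<delta>E) / (\<beta>E * \<nu> * \<nu>E - \<delta>F * (\<nu>E + \<delta>E))"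
  shows "filippov_GAS (closed_loop \<beta>E \<nu>E \<delta>E \<delta>M \<delta>F \<delta>s K \<nu> \<gamma>s k) Dp
           (Mset \<beta>E \<nu>E \<delta>E \<delta>M K \<nu> \<kappa>)"
proof -
  interpret sterile_insect_feedback \<beta>E \<nu>E \<delta>E \<delta>M \<delta>F \<delta>s K \<nu> \<gamma>s k \<kappa>
    by (rule sterile_insect_feedbackI) (use assms in auto)
  show ?thesis by (rule filippov_GAS_M)
qed

end
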